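(* Let $\delta=(\mathbf a_1,\mathbf a_2,\mathbf a_3)$ be a nondegenerate m-triangle with central angle $\alpha_1$ opposite to the vector $\mathbf a_1$. Then the area of the spherical triangle in the shape sphere $M^\ast\simeq S^2(1/2)$ with vertices $\mathfrak b_{12},\delta^\ast,\mathfrak b_{31}$ equals $A_1=\frac12(\pi-\alpha_1)$.
   Context: Masses $m_1,m_2,m_3>0$, $m_1+m_2+m_3=1$; $\mathbf a_i\in\mathbb R^3$ with $\sum m_i\mathbf a_i=0$; $\alpha_1$ is the angle at the origin between $\mathbf a_2$ and $\mathbf a_3$. The shape sphere $M^\ast$ is the space of oriented m-triangles with $\sum m_i|\mathbf a_i|^2=1$ modulo rotation, with the kinematic metric (induced by $\sum m_i|d\mathbf a_i|^2$ via zero angular momentum lifts), a round sphere of radius $1/2$ whose equator consists of collinear shapes; $\delta^\ast$ is the shape of $\delta$ (lying in the hemisphere determined by the orientation of $\delta$), and $\mathfrak b_{ij}$ is the binary collision shape on the equator where $\mathbf a_i=\mathbf a_j$. The spherical triangle is the geodesic triangle in that hemisphere. *)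

theory Defs
  imports "HOL-Analysis.Analysis" "HOL-Analysis.Cross3"
begin

definition is_mtriangle :: "(nat \<Rightarrow> real) \<Rightarrow> (nat \<Rightarrow> real^3) \<Rightarrow> bool" where
  "is_mtriangle m a \<longleftrightarrow> m 1 *\<^sub>R a 1 + m 2 *\<^sub>R a 2 + m 3 *\<^sub>R a 3 = 0"

definition nondegenerate :: "(nat \<Rightarrow> real^3) \<Rightarrow> bool" where
  "nondegenerate a \<longleftrightarrow> cross3 (a 2 - a 1) (a 3 - a 1) \<noteq> 0"

definition vec_angle :: "real^3 \<Rightarrow> real^3 \<Rightarrow> real" where
  "vec_angle x y = arccos ((x \<bullet> y) / (norm x * norm y))"

definition inertia :: "(nat \<Rightarrow> real) \<Rightarrow> (nat \<Rightarrow> real^3) \<Rightarrow> real" where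
  "inertia m a = m 1 * (norm (a 1))\<^sup>2 + m 2 * (norm (a 2))\<^sup>2 + m 3 * (norm (a 3))\<^sup>2"

text \<open>Mass-weighted Jacobi vectors: for centred configurations,
  inertia m a = |jacobi1|^2 + |jacobi2|^2 (total mass 1).\<close>
definition jacobi1 :: "(nat \<Rightarrow> real) \<Rightarrow> (nat \<Rightarrow> real^3) \<Rightarrow> real^3" where
  "jacobi1 m a = sqrt (m 1 * m 2 / (m 1 + m 2)) *\<^sub>R (a 2 - a 1)"

definition jacobi2 :: "(nat \<Rightarrow> real) \<Rightarrow> (nat \<Rightarrow> real^3) \<Rightarrow> real^3" where
  "jacobi2 m a = sqrt ((m 1 + m 2) * m 3) *\<^sub>R
     (a 3 - (1 / (m 1 + m 2)) *\<^sub>R (m 1 *\<^sub>R a 1 + m 2 *\<^sub>R a 2))"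

text \<open>The shape map onto the round sphere of radius 1/2 in R^3 (Hopf map in Jacobi
  coordinates, applied to the normalised configuration a / sqrt(inertia)); this is an
  isometry of the shape sphere M* with the kinematic metric onto S^2(1/2).  The equator
  (third coordinate 0) consists of the collinear shapes; the upper hemisphere is used as
  the hemisphere of the orientation of the triangle.\<close>
definition shape :: "(nat \<Rightarrow> real) \<Rightarrow> (nat \<Rightarrow> real^3) \<Rightarrow> real^3" where
  "shape m a = (let z1 = jacobi1 m a; z2 = jacobi2 m a in
     (1 / inertia m a) *\<^sub>R
       vector [((norm z1)\<^sup>2 - (norm z2)\<^sup>2) / 2, z1 \<bullet> z2, norm (cross3 z1 z2)])"

definition binary_collision :: "(nat \<Rightarrow> real) \<Rightarrow> nat \<Rightarrow> nat \<Rightarrow> real^3" where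
  "binary_collision m i j = (THE p. \<forall>a. is_mtriangle m a \<and> a i = a j \<and> inertia m a \<noteq> 0
       \<longrightarrow> shape m a = p)"

text \<open>Geodesic (spherical) triangle on the sphere of radius r centred at 0 with vertices
  P, Q, R lying in a common hemisphere: the intersection of the sphere with the convex
  cone spanned by the vertices.\<close>
definition sph_triangle :: "real \<Rightarrow> real^3 \<Rightarrow> real^3 \<Rightarrow> real^3 \<Rightarrow> (real^3) set" where
  "sph_triangle r P Q R = {x. norm x = r \<and>
     (\<exists>u v w. u \<ge> 0 \<and> v \<ge> 0 \<and> w \<ge> 0 \<and> x = u *\<^sub>R P + v *\<^sub>R Q + w *\<^sub>R R)}"

text \<open>Surface area of a subset S of the sphere of radius r centred at 0, via the volume of
  the solid cone over S: vol(cone) = (r/3) * area(S).\<close>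
definition sph_area :: "real \<Rightarrow> (real^3) set \<Rightarrow> real" where
  "sph_area r S = 3 / r * measure lebesgue {t *\<^sub>R x | t x. 0 \<le> t \<and> t \<le> 1 \<and> x \<in> S}"

end

theory Submission
  imports Defs
begin

text \<open>Scaled by \<open>2\<close>, the shape sphere becomes the unit sphere and the three vertices become
  \<open>p = (-1, 0, 0)\<close>, a point \<open>r\<close> on the equator and \<open>q = 2 \<delta>\<^sup>*\<close>. Girard's theorem, which follows
  from the volumes of lunes of a ball (the volume of a wedge is additive and nonnegative in its
  angle, hence linear in it), gives the area of a geodesic triangle as its spherical excess \<open>E\<close>;
  by the van Oosterom--Strackee formula, \<open>E / 2\<close> is the argument of
  \<open>1 + p \<bullet> r + r \<bullet> q + q \<bullet> p + i det (p, r, q)\<close>. In Jacobi coordinates this complex number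
  is a positive multiple of \<open>exp (i (pi - \<alpha>\<^sub>1))\<close>, so \<open>E = 2 (pi - \<alpha>\<^sub>1)\<close> and the area on the sphere
  of radius \<open>1/2\<close> is \<open>E / 4 = (pi - \<alpha>\<^sub>1) / 2\<close>.\<close>

section \<open>Angles between vectors\<close>

lemma inner_vec3: "(x::real^3) \<bullet> y = x$1 * y$1 + x$2 * y$2 + x$3 * y$3"
  by (simp add: inner_vec_def sum_3)

lemma vec_angle_abs_cos_le_1: "\<bar>(x \<bullet> y) / (norm x * norm y)\<bar> \<le> 1"
  using Cauchy_Schwarz_ineq2[of x y]
  by (cases "norm x * norm y = 0") (simp_all add: divide_le_eq_1)

lemma vec_angle_nonneg: "0 \<le> vec_angle x y"
  and vec_angle_le_pi: "vec_angle x y \<le> pi"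
  using vec_angle_abs_cos_le_1[of x y] unfolding vec_angle_def abs_le_iff
  by (auto intro: arccos_lbound arccos_ubound)

lemma cos_vec_angle: "cos (vec_angle x y) = (x \<bullet> y) / (norm x * norm y)"
  unfolding vec_angle_def using vec_angle_abs_cos_le_1 by (rule cos_arccos_abs)

lemma sin_vec_angle:
  assumes "x \<noteq> 0" "y \<noteq> 0"
  shows "sin (vec_angle x y) = norm (cross3 x y) / (norm x * norm y)"
proof -
  have N: "norm x * norm y > 0" using assms by simp
  have "(norm (cross3 x y) / (norm x * norm y))\<^sup>2 = 1 - ((x \<bullet> y) / (norm x * norm y))\<^sup>2"
    using norm_cross_dot[of x y] assms
    by (simp add: power_divide power_mult_distrib eq_diff_eq flip: add_divide_distrib)
  then have "sqrt (1 - ((x \<bullet> y) / (norm x * norm y))\<^sup>2) = norm (cross3 x y) / (norm x * norm y)"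
    using N by (metis abs_of_nonneg divide_nonneg_pos norm_ge_zero real_sqrt_abs)
  then show ?thesis
    unfolding vec_angle_def sin_arccos_abs[OF vec_angle_abs_cos_le_1] .
qed

lemma vec_angle_bounds_strict:
  assumes "cross3 x y \<noteq> 0"
  shows "0 < vec_angle x y" "vec_angle x y < pi"
proof -
  have "x \<noteq> 0" "y \<noteq> 0" using assms by auto
  then have "sin (vec_angle x y) > 0" using assms by (simp add: sin_vec_angle)
  then show "0 < vec_angle x y" "vec_angle x y < pi"
    using vec_angle_nonneg[of x y] vec_angle_le_pi[of x y] by (auto simp: order_le_less)
qed

lemma vec_angle_scaleR: "0 < c \<Longrightarrow> 0 < d \<Longrightarrow> vec_angle (c *\<^sub>R x) (d *\<^sub>R y) = vec_angle x y"
  unfolding vec_angle_def by (simp add: field_simps)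

lemma cis_vec_angle:
  assumes "x \<noteq> 0" "y \<noteq> 0"
  shows "cis (vec_angle x y) = complex_of_real (1 / (norm x * norm y)) * Complex (x \<bullet> y) (norm (cross3 x y))"
  using assms by (simp add: complex_eq_iff cos_vec_angle sin_vec_angle)

section \<open>Volumes of wedges and lunes of a ball\<close>

lemma additive_grid:
  fixes f :: "real \<Rightarrow> real"
  assumes add: "\<And>s t. 0 < s \<Longrightarrow> 0 < t \<Longrightarrow> s + t \<le> b \<Longrightarrow> f (s + t) = f s + f t"
    and b: "0 < b" and k: "1 \<le> k" "k \<le> n"
  shows "f (real k * (b / n)) = real k / n * f b"
proof -
  have mult: "f (real j * (b / n)) = real j * f (b / n)" if "1 \<le> j" "j \<le> n" for j
    using that
  proof (induction j rule: nat_induct_at_least)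
    case (Suc j)
    have arg: "real (Suc j) * (b / n) = real j * (b / n) + b / n" by (simp add: distrib_right add_divide_distrib add.commute)
    have "real (Suc j) * (b / n) \<le> real n * (b / n)" using Suc.prems b by (intro mult_right_mono) simp_all
    then have "real j * (b / n) + b / n \<le> b" using Suc.prems unfolding arg by simp
    then have "f (real j * (b / n) + b / n) = f (real j * (b / n)) + f (b / n)"
      using Suc.hyps Suc.prems b by (intro add) simp_all
    then show ?case unfolding arg using Suc by (simp add: algebra_simps)
  qed simp
  have "f b = real n * f (b / n)" using mult[of n] k b by simp
  then show ?thesis using mult[OF k] k by simp
qed

lemma additive_nonneg_approx_linear:
  fixes f :: "real \<Rightarrow> real" and n :: nat
  assumes add: "\<And>s t. 0 < s \<Longrightarrow> 0 < t \<Longrightarrow> s + t \<le> b \<Longrightarrow> f (s + t) = f s + f t"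
    and nonneg: "\<And>t. 0 < t \<Longrightarrow> t \<le> b \<Longrightarrow> 0 \<le> f t"
    and s: "0 < s" "s \<le> b" and n: "1 \<le> n"
  shows "\<bar>f s - f b / b * s\<bar> \<le> f b / n"
proof -
  define c where "c = f b / b"
  have b: "0 < b" using s by simp
  have c: "0 \<le> c" unfolding c_def using nonneg[OF b order_refl] b by simp
  have fb: "f b = c * b" unfolding c_def using b by simp
  have mono: "f u \<le> f v" if "0 < u" "u \<le> v" "v \<le> b" for u v
  proof (cases "u = v")
    case False
    then have "f v = f u + f (v - u)" using add[of u "v - u"] that by simp
    then show ?thesis using nonneg[of "v - u"] that False by simp
  qed simp
  have upper: "f u \<le> c * u + c * b / n" if u: "0 < u" "u \<le> b" for u
  proof -
    define k where "k = nat \<lceil>n * u / b\<rceil>"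
    have "0 < n * u / b" using u n b by simp
    then have k: "n * u / b \<le> k" "k < n * u / b + 1" "1 \<le> k" unfolding k_def by linarith+
    have "n * u / b \<le> n" using u b by (simp add: field_simps mult_right_mono)
    then have "k \<le> n" unfolding k_def by linarith
    have "u \<le> real k * (b / n)" using k(1) n b by (simp add: field_simps)
    moreover have "real k * (b / n) \<le> b" using \<open>k \<le> n\<close> n b by (simp add: field_simps mult_right_mono)
    ultimately have "f u \<le> f (real k * (b / n))" using mono[OF u(1)] by blast
    also have "\<dots> = c * (real k * (b / n))"
      using additive_grid[where f = f and b = b, OF add b k(3) \<open>k \<le> n\<close>] by (simp add: fb)
    also have "\<dots> \<le> c * u + c * b / n"
      using mult_left_mono[OF less_imp_le[OF k(2)] c] n b by (simp add: field_simps)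
    finally show ?thesis .
  qed
  have "c * s - c * b / n \<le> f s"
  proof (cases "s = b")
    case False
    then have "f b = f s + f (b - s)" using add[of s "b - s"] s by simp
    then show ?thesis using upper[of "b - s"] s n False by (simp add: fb algebra_simps)
  qed (use fb c n b in \<open>simp add: field_simps\<close>)
  then show ?thesis using upper[OF s] fb b unfolding c_def by (simp add: abs_le_iff algebra_simps)
qed

lemma additive_nonneg_imp_linear:
  fixes f :: "real \<Rightarrow> real"
  assumes add: "\<And>s t. 0 < s \<Longrightarrow> 0 < t \<Longrightarrow> s + t \<le> b \<Longrightarrow> f (s + t) = f s + f t"
    and nonneg: "\<And>t. 0 < t \<Longrightarrow> t \<le> b \<Longrightarrow> 0 \<le> f t"
    and t: "0 < t" "t \<le> b"
  shows "f t = f b / b * t"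
proof -
  have close: "\<bar>f t - f b / b * t\<bar> \<le> e" if e: "0 < e" for e
  proof -
    obtain n :: nat where n: "f b / e < n" using reals_Archimedean2 by blast
    moreover have "0 \<le> f b / e" using nonneg[of b] t e by simp
    ultimately have "1 \<le> n" by linarith
    moreover have "f b / n \<le> e" using n e \<open>1 \<le> n\<close> by (simp add: field_simps)
    moreover have "\<bar>f t - f b / b * t\<bar> \<le> f b / n"
      using add nonneg t \<open>1 \<le> n\<close> by (rule additive_nonneg_approx_linear)
    ultimately show ?thesis by linarith
  qed
  have "\<bar>f t - f b / b * t\<bar> \<le> 0" by (metis add.left_neutral close field_le_epsilon)
  then show ?thesis by simp
qed

lemma measure_cball_real3: "0 \<le> r \<Longrightarrow> measure lebesgue (cball (0::real^3) r) = 4/3 * r^3 * pi"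
  by (simp add: content_cball_conv_ball sphere_volume)

lemma measure_split_halfspace:
  fixes S :: "'a::euclidean_space set"
  assumes "compact S" "n \<noteq> 0"
  shows "measure lebesgue S
       = measure lebesgue (S \<inter> {x. 0 \<le> n \<bullet> x}) + measure lebesgue (S \<inter> {x. n \<bullet> x \<le> 0})"
proof -
  have "negligible (S \<inter> {x. 0 \<le> n \<bullet> x} \<inter> (S \<inter> {x. n \<bullet> x \<le> 0}))"
    using assms(2) by (intro negligible_subset[OF negligible_hyperplane[of n 0]]) auto
  then show ?thesis
    using measure_Un3_negligible[of "S \<inter> {x. 0 \<le> n \<bullet> x}" "S \<inter> {x. n \<bullet> x \<le> 0}" "{}" S] assms
    by (force intro: lmeasurable_compact compact_Int_closed closed_halfspace_ge closed_halfspace_le)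
qed

lemma orthogonal_transformation_uminus: "orthogonal_transformation uminus"
  by (simp add: orthogonal_transformation linear_uminus)

lemma measure_half_cball:
  fixes n :: "real^3"
  assumes "n \<noteq> 0" "0 \<le> r"
  shows "measure lebesgue (cball 0 r \<inter> {x. 0 \<le> n \<bullet> x}) = 2/3 * r^3 * pi"
proof -
  have "uminus ` (cball 0 r \<inter> {x. 0 \<le> n \<bullet> x}) = cball (0::real^3) r \<inter> {x. n \<bullet> x \<le> 0}"
    by (auto simp: image_iff intro!: bexI[where x="- _"])
  then have "measure lebesgue (cball (0::real^3) r \<inter> {x. n \<bullet> x \<le> 0})
      = measure lebesgue (cball 0 r \<inter> {x. 0 \<le> n \<bullet> x})"
    by (metis measure_orthogonal_image orthogonal_transformation_uminus lmeasurable_compact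
        compact_cball compact_Int_closed closed_halfspace_ge)
  then show ?thesis
    using measure_split_halfspace[OF compact_cball assms(1), of 0 r] measure_cball_real3[OF assms(2)]
    by (simp add: algebra_simps)
qed

definition rotate_z :: "real \<Rightarrow> real^3 \<Rightarrow> real^3" where
  "rotate_z t x = vector [cos t * x$1 - sin t * x$2, sin t * x$1 + cos t * x$2, x$3]"

lemma orthogonal_transformation_rotate_z: "orthogonal_transformation (rotate_z t)"
proof -
  have "linear (rotate_z t)"
    by (rule linearI) (simp_all add: rotate_z_def vec_eq_iff forall_3 vector_3 algebra_simps)
  moreover have "rotate_z t v \<bullet> rotate_z t v = v \<bullet> v" for v
    using sin_cos_squared_add[of t]
    unfolding inner_vec3 rotate_z_def vector_3 by algebra
  ultimately show ?thesis by (simp add: orthogonal_transformation norm_eq_sqrt_inner)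
qed

lemma mem_rotate_z_image: "x \<in> rotate_z t ` S \<longleftrightarrow> rotate_z (- t) x \<in> S"
proof -
  have inv: "rotate_z (- s) (rotate_z s y) = y" for s y
  proof -
    have "cos s * (cos s * a - sin s * b) + sin s * (sin s * a + cos s * b) = a"
      and "cos s * (sin s * a + cos s * b) - sin s * (cos s * a - sin s * b) = b" for a b
      using sin_cos_squared_add[of s] by algebra+
    then show ?thesis by (simp add: rotate_z_def vec_eq_iff forall_3 vector_3)
  qed
  show ?thesis
  proof
    assume "x \<in> rotate_z t ` S"
    then show "rotate_z (- t) x \<in> S" using inv by auto
  next
    assume "rotate_z (- t) x \<in> S"
    moreover have "x = rotate_z t (rotate_z (- t) x)" using inv[of "- t" x] by simp
    ultimately show "x \<in> rotate_z t ` S" by (rule rev_image_eqI)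
  qed
qed

text \<open>For \<open>0 < t \<le> pi\<close>, the points of the ball whose azimuth lies in \<open>[0, t]\<close>.\<close>
definition wedge :: "real \<Rightarrow> real \<Rightarrow> (real^3) set" where
  "wedge r t = cball 0 r \<inter> {x. 0 \<le> x$2 \<and> 0 \<le> sin t * x$1 - cos t * x$2}"

lemma compact_wedge: "compact (wedge r t)"
proof -
  have "wedge r t = cball 0 r \<inter> {x. 0 \<le> axis 2 1 \<bullet> x} \<inter> {x. 0 \<le> vector [sin t, - cos t, 0] \<bullet> x}"
    by (auto simp: wedge_def inner_vec3 vector_3 axis_def)
  then show ?thesis
    by (simp add: compact_Int_closed closed_halfspace_ge closed_Int)
qed

text \<open>In polar coordinates \<open>(u, v)\<close>: an angle in \<open>[0, s]\<close> lies in \<open>[0, s + t]\<close>, and an angle in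
  \<open>[s, s + t]\<close> lies in \<open>[0, pi]\<close>.\<close>
lemma sector_add:
  fixes s t u v :: real
  assumes "0 < s" "0 < t" "s + t \<le> pi"
  shows "0 \<le> v \<Longrightarrow> 0 \<le> sin s * u - cos s * v \<Longrightarrow> 0 \<le> sin (s + t) * u - cos (s + t) * v"
    and "0 \<le> cos s * v - sin s * u \<Longrightarrow> 0 \<le> sin (s + t) * u - cos (s + t) * v \<Longrightarrow> 0 \<le> v"
proof -
  have sin_pos: "0 < sin s" "0 < sin t" "0 \<le> sin (s + t)"
    using assms by (auto intro!: sin_gt_zero sin_ge_zero)
  have sin_t: "sin t = sin (s + t) * cos s - cos (s + t) * sin s"
    using sin_diff[of "s + t" s] by simp
  show "0 \<le> sin (s + t) * u - cos (s + t) * v"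
    if "0 \<le> v" "0 \<le> sin s * u - cos s * v"
  proof -
    have "sin s * (sin (s + t) * u - cos (s + t) * v) = sin t * v + sin (s + t) * (sin s * u - cos s * v)"
      unfolding sin_t by (simp add: algebra_simps)
    also have "\<dots> \<ge> 0" using that sin_pos by simp
    finally show ?thesis using sin_pos by (simp add: zero_le_mult_iff)
  qed
  show "0 \<le> v" if "0 \<le> cos s * v - sin s * u" "0 \<le> sin (s + t) * u - cos (s + t) * v"
  proof -
    have "sin t * v = sin (s + t) * (cos s * v - sin s * u) + sin s * (sin (s + t) * u - cos (s + t) * v)"
      unfolding sin_t by (simp add: algebra_simps)
    also have "\<dots> \<ge> 0" using that sin_pos by simp
    finally show ?thesis using sin_pos by (simp add: zero_le_mult_iff)
  qed
qed

lemma measure_wedge_add: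
  assumes "0 < s" "0 < t" "s + t \<le> pi"
  shows "measure lebesgue (wedge r (s + t)) = measure lebesgue (wedge r s) + measure lebesgue (wedge r t)"
proof -
  define n :: "real^3" where "n = vector [- sin s, cos s, 0]"
  have "n \<noteq> 0"
  proof
    assume "n = 0"
    then have "sin s = 0" "cos s = 0" by (auto simp: n_def vec_eq_iff forall_3)
    then show False using sin_cos_squared_add[of s] by simp
  qed
  have n: "n \<bullet> x = cos s * x$2 - sin s * x$1" for x
    by (simp add: n_def inner_vec3 vector_3)
  have rotated: "rotate_z s ` wedge r t = wedge r (s + t) \<inter> {x. 0 \<le> n \<bullet> x}"
  proof (rule set_eqI)
    fix x :: "real^3"
    define y where "y = rotate_z (- s) x"
    have y: "y$1 = cos s * x$1 + sin s * x$2" "y$2 = cos s * x$2 - sin s * x$1"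
      by (simp_all add: y_def rotate_z_def algebra_simps)
    have "sin t * y$1 - cos t * y$2 = sin (s + t) * x$1 - cos (s + t) * x$2"
      unfolding y by (simp add: sin_add cos_add algebra_simps)
    moreover have "norm y = norm x"
      unfolding y_def using orthogonal_transformation orthogonal_transformation_rotate_z by blast
    ultimately show "x \<in> rotate_z s ` wedge r t \<longleftrightarrow> x \<in> wedge r (s + t) \<inter> {x. 0 \<le> n \<bullet> x}"
      using sector_add(2)[OF assms, where u = "x$1" and v = "x$2"]
      unfolding mem_rotate_z_image y_def[symmetric] wedge_def n by (auto simp: y(2))
  qed
  have "wedge r s = wedge r (s + t) \<inter> {x. n \<bullet> x \<le> 0}"
    using sector_add(1)[OF assms] by (auto simp: wedge_def n)
  then show ?thesis
    using measure_split_halfspace[OF compact_wedge[of r "s + t"] \<open>n \<noteq> 0\<close>] rotated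
      measure_orthogonal_image[OF orthogonal_transformation_rotate_z lmeasurable_compact[OF compact_wedge], of s r t]
    by simp
qed

lemma measure_wedge:
  assumes "0 \<le> r" "0 < t" "t \<le> pi"
  shows "measure lebesgue (wedge r t) = 2/3 * r^3 * t"
proof -
  have "wedge r pi = cball 0 r \<inter> {x. 0 \<le> axis 2 1 \<bullet> x}"
    by (auto simp: wedge_def inner_vec3 axis_def)
  then have half: "measure lebesgue (wedge r pi) = 2/3 * r^3 * pi"
    using measure_half_cball[of "axis 2 1" r] assms(1) by (simp add: axis_eq_0_iff)
  have "measure lebesgue (wedge r t) = measure lebesgue (wedge r pi) / pi * t"
    using assms(2,3) by (intro additive_nonneg_imp_linear[where f = "\<lambda>t. measure lebesgue (wedge r t)"] measure_wedge_add) auto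
  then show ?thesis unfolding half by simp
qed

lemma orthogonal_transformation_frame:
  fixes u v w :: "real^3"
  assumes "u \<bullet> u = 1" "v \<bullet> v = 1" "w \<bullet> w = 1" "u \<bullet> v = 0" "u \<bullet> w = 0" "v \<bullet> w = 0"
  shows "orthogonal_transformation (\<lambda>y::real^3. y$1 *\<^sub>R u + y$2 *\<^sub>R v + y$3 *\<^sub>R w)"
proof -
  define F where "F y = y$1 *\<^sub>R u + y$2 *\<^sub>R v + y$3 *\<^sub>R w" for y :: "real^3"
  have "linear F" unfolding F_def[abs_def] by (rule linearI) (simp_all add: algebra_simps)
  moreover have "F y \<bullet> F y = y \<bullet> y" for y
  proof -
    have "u \<bullet> F y = y$1" "v \<bullet> F y = y$2" "w \<bullet> F y = y$3"
      unfolding F_def using assms by (simp_all add: inner_add_right inner_commute)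
    moreover have "F y \<bullet> F y = y$1 * (u \<bullet> F y) + y$2 * (v \<bullet> F y) + y$3 * (w \<bullet> F y)"
      by (subst (1) F_def) (simp add: inner_add_left)
    ultimately show ?thesis by (simp add: inner_vec3)
  qed
  ultimately show ?thesis
    unfolding F_def[abs_def, symmetric] by (simp add: orthogonal_transformation norm_eq_sqrt_inner)
qed

lemma lune_frame:
  fixes n1 n2 :: "real^3"
  assumes cross: "cross3 n1 n2 \<noteq> 0"
  obtains F :: "real^3 \<Rightarrow> real^3" where "orthogonal_transformation F" "\<And>y. n1 \<bullet> F y = norm n1 * y$2"
    "\<And>y. n2 \<bullet> F y = norm n2 * (sin (vec_angle n1 n2) * y$1 + cos (vec_angle n1 n2) * y$2)"
proof -
  define \<beta> where "\<beta> = vec_angle n1 n2"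
  have n1: "n1 \<noteq> 0" and n2: "n2 \<noteq> 0" using cross by auto
  have sin_pos: "0 < sin \<beta>"
    using vec_angle_bounds_strict[OF cross] unfolding \<beta>_def by (intro sin_gt_zero) auto
  define v where "v = (1 / norm n1) *\<^sub>R n1"
  define h where "h = (1 / norm n2) *\<^sub>R n2"
  define u where "u = (1 / sin \<beta>) *\<^sub>R (h - cos \<beta> *\<^sub>R v)"
  define w where "w = cross3 u v"
  have vv: "v \<bullet> v = 1" and hh: "h \<bullet> h = 1"
    unfolding v_def h_def using n1 n2 by (simp_all add: dot_square_norm power2_eq_square)
  have vh: "v \<bullet> h = cos \<beta>" unfolding v_def h_def \<beta>_def cos_vec_angle by simp
  have h: "h = sin \<beta> *\<^sub>R u + cos \<beta> *\<^sub>R v" unfolding u_def using sin_pos by simp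
  have uv: "u \<bullet> v = 0" unfolding u_def using vv vh by (simp add: inner_diff_left inner_diff_right inner_commute)
  have "(h - cos \<beta> *\<^sub>R v) \<bullet> (h - cos \<beta> *\<^sub>R v) = (sin \<beta>)\<^sup>2"
    using vv vh hh sin_cos_squared_add[of \<beta>]
    by (simp add: inner_diff_left inner_diff_right inner_commute power2_eq_square)
  then have uu: "u \<bullet> u = 1" unfolding u_def using sin_pos by (simp add: power2_eq_square)
  have wu: "u \<bullet> w = 0" and wv: "v \<bullet> w = 0" unfolding w_def by (simp_all add: dot_cross_self)
  have ww: "w \<bullet> w = 1"
    using norm_cross_dot[of u v] uu vv uv unfolding w_def
    by (simp add: power2_norm_eq_inner power_mult_distrib)
  define F where "F y = y$1 *\<^sub>R u + y$2 *\<^sub>R v + y$3 *\<^sub>R w" for y :: "real^3"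
  have "orthogonal_transformation F"
    unfolding F_def[abs_def] using uu vv ww uv wu wv by (rule orthogonal_transformation_frame)
  moreover have comp: "u \<bullet> F y = y$1" "v \<bullet> F y = y$2" for y
    unfolding F_def using uu vv uv wu wv by (simp_all add: inner_add_right inner_commute)
  have n1v: "n1 = norm n1 *\<^sub>R v" and n2h: "n2 = norm n2 *\<^sub>R h"
    unfolding v_def h_def using n1 n2 by simp_all
  have "n1 \<bullet> F y = norm n1 * y$2" and "n2 \<bullet> F y = norm n2 * (sin \<beta> * y$1 + cos \<beta> * y$2)" for y
    using arg_cong[OF n1v, of "\<lambda>z. z \<bullet> F y"] arg_cong[OF n2h, of "\<lambda>z. z \<bullet> F y"]
    unfolding h by (simp_all add: inner_add_left comp)
  ultimately show thesis unfolding \<beta>_def by (rule that)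
qed

lemma measure_lune:
  fixes n1 n2 :: "real^3"
  assumes cross: "cross3 n1 n2 \<noteq> 0" and r: "0 \<le> r"
  shows "measure lebesgue (cball 0 r \<inter> {x. 0 \<le> n1 \<bullet> x} \<inter> {x. 0 \<le> n2 \<bullet> x})
       = 2/3 * r^3 * (pi - vec_angle n1 n2)"
proof -
  define \<beta> where "\<beta> = vec_angle n1 n2"
  obtain F :: "real^3 \<Rightarrow> real^3" where F: "orthogonal_transformation F" and n1F: "\<And>y. n1 \<bullet> F y = norm n1 * y$2"
    and n2F: "\<And>y. n2 \<bullet> F y = norm n2 * (sin \<beta> * y$1 + cos \<beta> * y$2)"
    using lune_frame[OF cross] unfolding \<beta>_def by blast
  have n1: "n1 \<noteq> 0" and n2: "n2 \<noteq> 0" using cross by auto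
  have "x \<in> F ` wedge r (pi - \<beta>) \<longleftrightarrow> x \<in> cball 0 r \<inter> {x. 0 \<le> n1 \<bullet> x} \<inter> {x. 0 \<le> n2 \<bullet> x}" for x
  proof -
    obtain y where x: "x = F y" using orthogonal_transformation_surj[OF F] by (metis surjD)
    have "norm (F y) = norm y" using F orthogonal_transformation by blast
    moreover have "F y \<in> F ` wedge r (pi - \<beta>) \<longleftrightarrow> y \<in> wedge r (pi - \<beta>)"
      using orthogonal_transformation_inj[OF F] by (rule inj_image_mem_iff)
    ultimately show ?thesis
      unfolding x using n1 n2 by (simp add: wedge_def n1F n2F zero_le_mult_iff)
  qed
  then have "cball 0 r \<inter> {x. 0 \<le> n1 \<bullet> x} \<inter> {x. 0 \<le> n2 \<bullet> x} = F ` wedge r (pi - \<beta>)" by blast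
  then have "measure lebesgue (cball 0 r \<inter> {x. 0 \<le> n1 \<bullet> x} \<inter> {x. 0 \<le> n2 \<bullet> x})
      = measure lebesgue (wedge r (pi - \<beta>))"
    using measure_orthogonal_image[OF F lmeasurable_compact[OF compact_wedge]] by simp
  also have "\<dots> = 2/3 * r^3 * (pi - \<beta>)"
    using vec_angle_bounds_strict[OF cross] unfolding \<beta>_def by (intro measure_wedge r) auto
  finally show ?thesis unfolding \<beta>_def .
qed

text \<open>Inclusion--exclusion over the three lunes, which overlap exactly in the trihedral cone;
  it closes because the part of the lune of \<open>n2, n3\<close> outside \<open>{x. 0 \<le> n1 \<bullet> x}\<close> is the antipodal
  image of the part of \<open>{x. 0 \<le> n1 \<bullet> x}\<close> outside both other halfspaces.\<close>
lemma measure_cball_Int_three_halfspaces: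
  fixes n1 n2 n3 :: "real^3" and r :: real
  assumes n: "n1 \<noteq> 0" "n2 \<noteq> 0" "n3 \<noteq> 0"
  defines "B \<equiv> cball (0::real^3) r" and "H \<equiv> \<lambda>n. {x::real^3. 0 \<le> n \<bullet> x}"
  shows "2 * measure lebesgue (B \<inter> H n1 \<inter> H n2 \<inter> H n3)
       = measure lebesgue (B \<inter> H n2 \<inter> H n3) + measure lebesgue (B \<inter> H n3 \<inter> H n1)
         + measure lebesgue (B \<inter> H n1 \<inter> H n2) - measure lebesgue (B \<inter> H n1)"
proof -
  define H' where "H' n = {x::real^3. n \<bullet> x \<le> 0}" for n
  have cH: "compact (S \<inter> H n)" if "compact S" for S n
    unfolding H_def using that by (intro compact_Int_closed closed_halfspace_ge)
  have cH': "compact (S \<inter> H' n)" if "compact S" for S n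
    unfolding H'_def using that by (intro compact_Int_closed closed_halfspace_le)
  have split: "measure lebesgue S = measure lebesgue (S \<inter> H n) + measure lebesgue (S \<inter> H' n)"
    if "compact S" "n \<noteq> 0" for S n
    unfolding H_def H'_def using that by (rule measure_split_halfspace)
  define V where "V = B \<inter> H n1 \<inter> H n2 \<inter> H n3"
  define X where "X = B \<inter> H n2 \<inter> H n3 \<inter> H' n1"
  define Y where "Y = B \<inter> H n1 \<inter> H' n2 \<inter> H' n3"
  have "compact B" unfolding B_def by simp
  have "measure lebesgue (B \<inter> H n2 \<inter> H n3) = measure lebesgue V + measure lebesgue X"
    using split[OF cH[OF cH[OF \<open>compact B\<close>]] n(1)] by (simp add: V_def X_def Int_ac)
  moreover have "measure lebesgue (B \<inter> H n3 \<inter> H n1)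
      = measure lebesgue V + measure lebesgue (B \<inter> H n3 \<inter> H n1 \<inter> H' n2)"
    using split[OF cH[OF cH[OF \<open>compact B\<close>]] n(2)] by (simp add: V_def Int_ac)
  moreover have "measure lebesgue (B \<inter> H n1 \<inter> H n2)
      = measure lebesgue V + measure lebesgue (B \<inter> H n1 \<inter> H n2 \<inter> H' n3)"
    using split[OF cH[OF cH[OF \<open>compact B\<close>]] n(3)] by (simp add: V_def Int_ac)
  moreover have "measure lebesgue (B \<inter> H n1)
      = measure lebesgue (B \<inter> H n1 \<inter> H n2) + measure lebesgue (B \<inter> H n1 \<inter> H' n2)"
    using split[OF cH[OF \<open>compact B\<close>] n(2)] by simp
  moreover have "measure lebesgue (B \<inter> H n1 \<inter> H' n2)
      = measure lebesgue (B \<inter> H n3 \<inter> H n1 \<inter> H' n2) + measure lebesgue Y"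
    using split[OF cH'[OF cH[OF \<open>compact B\<close>, of n1], of n2] n(3)] by (simp add: Y_def Int_ac)
  moreover have "measure lebesgue Y = measure lebesgue X"
  proof -
    have "Y = uminus ` X"
      unfolding X_def Y_def B_def H_def H'_def by (auto simp: image_iff intro!: bexI[where x = "- _"])
    moreover have "compact X" unfolding X_def by (intro cH cH' \<open>compact B\<close>)
    ultimately show ?thesis
      using measure_orthogonal_image[OF orthogonal_transformation_uminus lmeasurable_compact] by simp
  qed
  ultimately show ?thesis unfolding V_def by linarith
qed

section \<open>Girard's theorem\<close>

lemma cross3_cross3_cyclic: "cross3 (cross3 R P) (cross3 P Q) = (P \<bullet> cross3 Q R) *\<^sub>R P"
  by (simp add: cross3_def inner_vec3 vec_eq_iff forall_3 vector_3 algebra_simps)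

lemma triple_product_cyclic: "Q \<bullet> cross3 R P = P \<bullet> cross3 Q R" "R \<bullet> cross3 P Q = P \<bullet> cross3 Q R"
  by (simp_all add: cross3_simps)

text \<open>The angle between the normals \<open>cross3 R P\<close> and \<open>cross3 P Q\<close> of the two sides through \<open>P\<close>
  is \<open>pi\<close> minus the angle of the spherical triangle at \<open>P\<close>, so this is the angle sum minus \<open>pi\<close>.\<close>
definition sph_excess :: "real^3 \<Rightarrow> real^3 \<Rightarrow> real^3 \<Rightarrow> real" where
  "sph_excess P Q R = 2 * pi -
     (vec_angle (cross3 R P) (cross3 P Q) + vec_angle (cross3 P Q) (cross3 Q R) + vec_angle (cross3 Q R) (cross3 R P))"

lemma measure_cball_Int_trihedral:
  fixes P Q R :: "real^3"
  assumes D: "0 < P \<bullet> cross3 Q R" and r: "0 \<le> r"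
  shows "measure lebesgue (cball 0 r \<inter> {x. 0 \<le> cross3 Q R \<bullet> x} \<inter> {x. 0 \<le> cross3 R P \<bullet> x} \<inter> {x. 0 \<le> cross3 P Q \<bullet> x})
       = r^3 / 3 * sph_excess P Q R"
proof -
  define n1 n2 n3 where "n1 = cross3 Q R" and "n2 = cross3 R P" and "n3 = cross3 P Q"
  have "P \<noteq> 0" "Q \<noteq> 0" "R \<noteq> 0" and n: "n1 \<noteq> 0" "n2 \<noteq> 0" "n3 \<noteq> 0"
    using D triple_product_cyclic[of P Q R] by (auto simp: n1_def n2_def n3_def)
  then have "cross3 n2 n3 \<noteq> 0" "cross3 n3 n1 \<noteq> 0" "cross3 n1 n2 \<noteq> 0"
    unfolding n1_def n2_def n3_def cross3_cross3_cyclic triple_product_cyclic using D by auto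
  then show ?thesis
    using measure_cball_Int_three_halfspaces[OF n, of r] measure_half_cball[OF n(1) r]
      measure_lune[OF _ r, of n2 n3] measure_lune[OF _ r, of n3 n1] measure_lune[OF _ r, of n1 n2]
    unfolding n1_def n2_def n3_def sph_excess_def by (simp add: field_simps)
qed

lemma nonneg_combination3_iff:
  fixes P Q R x :: "real^3"
  assumes D: "0 < P \<bullet> cross3 Q R"
  shows "(\<exists>u v w. 0 \<le> u \<and> 0 \<le> v \<and> 0 \<le> w \<and> x = u *\<^sub>R P + v *\<^sub>R Q + w *\<^sub>R R)
     \<longleftrightarrow> 0 \<le> cross3 Q R \<bullet> x \<and> 0 \<le> cross3 R P \<bullet> x \<and> 0 \<le> cross3 P Q \<bullet> x"
proof
  assume "\<exists>u v w. 0 \<le> u \<and> 0 \<le> v \<and> 0 \<le> w \<and> x = u *\<^sub>R P + v *\<^sub>R Q + w *\<^sub>R R"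
  then obtain u v w where "0 \<le> u" "0 \<le> v" "0 \<le> w" and x: "x = u *\<^sub>R P + v *\<^sub>R Q + w *\<^sub>R R"
    by blast
  moreover have "cross3 Q R \<bullet> x = u * (P \<bullet> cross3 Q R)" "cross3 R P \<bullet> x = v * (P \<bullet> cross3 Q R)"
    "cross3 P Q \<bullet> x = w * (P \<bullet> cross3 Q R)"
    unfolding x using triple_product_cyclic[of P Q R]
    by (simp_all add: inner_add_right dot_cross_self inner_commute)
  ultimately show "0 \<le> cross3 Q R \<bullet> x \<and> 0 \<le> cross3 R P \<bullet> x \<and> 0 \<le> cross3 P Q \<bullet> x"
    using D by simp
next
  assume "0 \<le> cross3 Q R \<bullet> x \<and> 0 \<le> cross3 R P \<bullet> x \<and> 0 \<le> cross3 P Q \<bullet> x"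
  moreover have "(P \<bullet> cross3 Q R) *\<^sub>R x
      = (cross3 Q R \<bullet> x) *\<^sub>R P + (cross3 R P \<bullet> x) *\<^sub>R Q + (cross3 P Q \<bullet> x) *\<^sub>R R"
    by (simp add: cross3_def inner_vec3 vector_3 vec_eq_iff forall_3 algebra_simps)
  then have "x = (1 / (P \<bullet> cross3 Q R)) *\<^sub>R
      ((cross3 Q R \<bullet> x) *\<^sub>R P + (cross3 R P \<bullet> x) *\<^sub>R Q + (cross3 P Q \<bullet> x) *\<^sub>R R)"
    using D by (metis divide_self_if less_irrefl scaleR_one scaleR_scaleR times_divide_eq_left mult_1)
  then have "x = ((cross3 Q R \<bullet> x) / (P \<bullet> cross3 Q R)) *\<^sub>R P + ((cross3 R P \<bullet> x) / (P \<bullet> cross3 Q R)) *\<^sub>R Q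
      + ((cross3 P Q \<bullet> x) / (P \<bullet> cross3 Q R)) *\<^sub>R R"
    by (simp add: scaleR_add_right)
  ultimately show "\<exists>u v w. 0 \<le> u \<and> 0 \<le> v \<and> 0 \<le> w \<and> x = u *\<^sub>R P + v *\<^sub>R Q + w *\<^sub>R R"
    using D by (meson divide_nonneg_pos)
qed

lemma segments_sphere_Int_cone:
  fixes C :: "'a::real_normed_vector set"
  assumes cone: "\<And>c x. x \<in> C \<Longrightarrow> 0 \<le> c \<Longrightarrow> c *\<^sub>R x \<in> C"
    and x0: "x0 \<in> C" "x0 \<noteq> 0" and r: "0 < r"
  shows "{t *\<^sub>R x |t x. 0 \<le> t \<and> t \<le> 1 \<and> x \<in> sphere 0 r \<inter> C} = cball 0 r \<inter> C"
proof (intro set_eqI iffI)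
  fix y assume "y \<in> {t *\<^sub>R x |t x. 0 \<le> t \<and> t \<le> 1 \<and> x \<in> sphere 0 r \<inter> C}"
  then obtain t x where "y = t *\<^sub>R x" "0 \<le> t" "t \<le> 1" "norm x = r" "x \<in> C" by auto
  then show "y \<in> cball 0 r \<inter> C" using cone mult_left_le_one_le[of r t] r by auto
next
  fix y assume y: "y \<in> cball 0 r \<inter> C"
  define x where "x = (if y = 0 then (r / norm x0) *\<^sub>R x0 else (r / norm y) *\<^sub>R y)"
  have "x \<in> sphere 0 r \<inter> C" using y x0 r cone by (auto simp: x_def)
  moreover have "y = (norm y / r) *\<^sub>R x" "0 \<le> norm y / r" "norm y / r \<le> 1"
    using y r by (auto simp: x_def)
  ultimately show "y \<in> {t *\<^sub>R x |t x. 0 \<le> t \<and> t \<le> 1 \<and> x \<in> sphere 0 r \<inter> C}" by blast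
qed

theorem sph_area_sph_triangle:
  fixes P Q R :: "real^3"
  assumes D: "0 < P \<bullet> cross3 Q R" and r: "0 < r"
  shows "sph_area r (sph_triangle r P Q R) = r\<^sup>2 * sph_excess P Q R"
proof -
  define C where "C = {x. 0 \<le> cross3 Q R \<bullet> x} \<inter> {x. 0 \<le> cross3 R P \<bullet> x} \<inter> {x. 0 \<le> cross3 P Q \<bullet> x}"
  have "sph_triangle r P Q R = sphere 0 r \<inter> C"
    unfolding sph_triangle_def C_def nonneg_combination3_iff[OF D] by auto
  moreover have "{t *\<^sub>R x |t x. 0 \<le> t \<and> t \<le> 1 \<and> x \<in> sphere 0 r \<inter> C} = cball 0 r \<inter> C"
  proof (rule segments_sphere_Int_cone[OF _ _ _ r])
    show "P \<in> C" "P \<noteq> 0" using D by (auto simp: C_def dot_cross_self inner_commute)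
  qed (auto simp: C_def)
  ultimately have "sph_area r (sph_triangle r P Q R) = 3 / r * measure lebesgue (cball 0 r \<inter> C)"
    unfolding sph_area_def by simp
  also have "cball 0 r \<inter> C
      = cball 0 r \<inter> {x. 0 \<le> cross3 Q R \<bullet> x} \<inter> {x. 0 \<le> cross3 R P \<bullet> x} \<inter> {x. 0 \<le> cross3 P Q \<bullet> x}"
    by (auto simp: C_def)
  also have "3 / r * measure lebesgue \<dots> = r\<^sup>2 * sph_excess P Q R"
    unfolding measure_cball_Int_trihedral[OF D less_imp_le[OF r]] using r
    by (simp add: power2_eq_square power3_eq_cube)
  finally show ?thesis .
qed

lemma sph_triangle_swap: "sph_triangle r P Q R = sph_triangle r P R Q"
proof -
  have "sph_triangle r P Q R \<subseteq> sph_triangle r P R Q" for Q R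
  proof
    fix x assume "x \<in> sph_triangle r P Q R"
    then obtain u v w where "norm x = r" "0 \<le> u" "0 \<le> v" "0 \<le> w" "x = u *\<^sub>R P + v *\<^sub>R Q + w *\<^sub>R R"
      by (auto simp: sph_triangle_def)
    then show "x \<in> sph_triangle r P R Q"
      unfolding sph_triangle_def mem_Collect_eq
      by (intro conjI exI[of _ u] exI[of _ w] exI[of _ v]) (simp_all add: algebra_simps)
  qed
  then show ?thesis by blast
qed

section \<open>The van Oosterom--Strackee formula\<close>

lemma inner_cross3_cross3: "cross3 x y \<bullet> cross3 z w = (x \<bullet> z) * (y \<bullet> w) - (x \<bullet> w) * (y \<bullet> z)"
  by (simp add: cross3_def inner_vec3 vector_3 algebra_simps)

lemma triple_product_square:
  "(p \<bullet> cross3 q r)\<^sup>2 = (p \<bullet> p) * (q \<bullet> q) * (r \<bullet> r) + 2 * (p \<bullet> q) * (q \<bullet> r) * (r \<bullet> p)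
     - (p \<bullet> p) * (q \<bullet> r)\<^sup>2 - (q \<bullet> q) * (r \<bullet> p)\<^sup>2 - (r \<bullet> r) * (p \<bullet> q)\<^sup>2"
  unfolding cross3_def inner_vec3 vector_3 by algebra

lemma inner_less_one:
  fixes x y :: "'a::real_inner"
  assumes "norm x = 1" "norm y = 1" "x \<noteq> y"
  shows "x \<bullet> y < 1"
proof -
  have "x \<bullet> x = 1" "y \<bullet> y = 1" using assms(1,2) by (simp_all add: dot_square_norm)
  then have "(x - y) \<bullet> (x - y) = 2 - 2 * (x \<bullet> y)"
    by (simp add: inner_diff_left inner_diff_right inner_commute)
  moreover have "0 < (x - y) \<bullet> (x - y)" using assms(3) by simp
  ultimately show ?thesis by simp
qed

lemma Complex_product_Gram:
  fixes a b c D :: real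
  assumes "D\<^sup>2 = 1 - a\<^sup>2 - b\<^sup>2 - c\<^sup>2 + 2 * a * b * c"
  shows "Complex (b * c - a) D * Complex (c * a - b) D * Complex (a * b - c) D
       = complex_of_real ((1 - a) * (1 - b) * (1 - c) / 2) * (cnj (Complex (1 + a + b + c) D))\<^sup>2"
proof (rule complex_eqI)
  have "((b * c - a) * (c * a - b) * (a * b - c) - D\<^sup>2 * ((b * c - a) + (c * a - b) + (a * b - c))) * 2
      = ((1 - a) * (1 - b) * (1 - c)) * ((1 + a + b + c)\<^sup>2 - D\<^sup>2)"
    using assms by algebra
  then show "Re (Complex (b * c - a) D * Complex (c * a - b) D * Complex (a * b - c) D)
      = Re (complex_of_real ((1 - a) * (1 - b) * (1 - c) / 2) * (cnj (Complex (1 + a + b + c) D))\<^sup>2)"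
    by (simp add: power2_eq_square algebra_simps)
  have "(b * c - a) * (c * a - b) + (c * a - b) * (a * b - c) + (a * b - c) * (b * c - a) - D\<^sup>2
      = - ((1 - a) * (1 - b) * (1 - c)) * (1 + a + b + c)"
    using assms by algebra
  then show "Im (Complex (b * c - a) D * Complex (c * a - b) D * Complex (a * b - c) D)
      = Im (complex_of_real ((1 - a) * (1 - b) * (1 - c) / 2) * (cnj (Complex (1 + a + b + c) D))\<^sup>2)"
    by (simp add: power2_eq_square algebra_simps) (use assms in algebra)
qed

lemma sph_excess_nonneg:
  assumes "0 < P \<bullet> cross3 Q R"
  shows "0 \<le> sph_excess P Q R"
proof -
  have "0 \<le> 1^3 / 3 * sph_excess P Q R"
    unfolding measure_cball_Int_trihedral[OF assms zero_le_one, symmetric] by (rule measure_nonneg)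
  then show ?thesis by simp
qed

lemma sph_excess_le_2pi: "sph_excess P Q R \<le> 2 * pi"
  using vec_angle_nonneg[of "cross3 R P" "cross3 P Q"] vec_angle_nonneg[of "cross3 P Q" "cross3 Q R"]
    vec_angle_nonneg[of "cross3 Q R" "cross3 R P"]
  unfolding sph_excess_def by linarith

lemma sph_excess_scaleR: "0 < c \<Longrightarrow> sph_excess (c *\<^sub>R P) (c *\<^sub>R Q) (c *\<^sub>R R) = sph_excess P Q R"
  by (simp add: sph_excess_def cross_mult_left cross_mult_right vec_angle_scaleR)

lemma cis_vec_angle_normals:
  fixes p q r :: "real^3"
  assumes p: "norm p = 1" and D: "0 < p \<bullet> cross3 q r"
  shows "cis (vec_angle (cross3 r p) (cross3 p q))
       = complex_of_real (1 / (norm (cross3 r p) * norm (cross3 p q)))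
         * Complex ((r \<bullet> p) * (p \<bullet> q) - q \<bullet> r) (p \<bullet> cross3 q r)"
proof -
  have "cross3 r p \<noteq> 0" "cross3 p q \<noteq> 0" using D triple_product_cyclic[of p q r] by auto
  moreover have "cross3 r p \<bullet> cross3 p q = (r \<bullet> p) * (p \<bullet> q) - q \<bullet> r"
    using p by (simp add: inner_cross3_cross3 dot_square_norm inner_commute)
  moreover have "norm (cross3 (cross3 r p) (cross3 p q)) = p \<bullet> cross3 q r"
    using p D by (simp add: cross3_cross3_cyclic)
  ultimately show ?thesis by (simp add: cis_vec_angle)
qed

lemma cis_sph_excess:
  fixes p q r :: "real^3"
  assumes unit: "norm p = 1" "norm q = 1" "norm r = 1" and D: "0 < p \<bullet> cross3 q r"
  shows "\<exists>l>0. cis (sph_excess p q r)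
     = complex_of_real l * (Complex (1 + p \<bullet> q + q \<bullet> r + r \<bullet> p) (p \<bullet> cross3 q r))\<^sup>2"
proof -
  define a b c d where "a = q \<bullet> r" and "b = r \<bullet> p" and "c = p \<bullet> q" and "d = p \<bullet> cross3 q r"
  have "p \<noteq> q" "q \<noteq> r" "r \<noteq> p" using D by (auto simp: dot_cross_self)
  then have "a < 1" "b < 1" "c < 1" unfolding a_def b_def c_def using unit by (auto intro: inner_less_one)
  have "cross3 q r \<noteq> 0" "cross3 r p \<noteq> 0" "cross3 p q \<noteq> 0"
    using D triple_product_cyclic[of p q r] by auto
  define k where "k = 1 / (norm (cross3 r p) * norm (cross3 p q)) * (1 / (norm (cross3 p q) * norm (cross3 q r)))
    * (1 / (norm (cross3 q r) * norm (cross3 r p)))"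
  have "0 < k * ((1 - a) * (1 - b) * (1 - c) / 2)"
    unfolding k_def using \<open>cross3 q r \<noteq> 0\<close> \<open>cross3 r p \<noteq> 0\<close> \<open>cross3 p q \<noteq> 0\<close> \<open>a < 1\<close> \<open>b < 1\<close> \<open>c < 1\<close>
    by simp
  have gram: "d\<^sup>2 = 1 - a\<^sup>2 - b\<^sup>2 - c\<^sup>2 + 2 * a * b * c"
    using triple_product_square[of p q r] unit
    unfolding a_def b_def c_def d_def by (simp add: dot_square_norm algebra_simps)
  have "cnj (cis (sph_excess p q r)) = cis (2 * pi - sph_excess p q r)"
    by (simp add: complex_eq_iff cos_diff sin_diff)
  also have "\<dots> = cis (vec_angle (cross3 r p) (cross3 p q)) * cis (vec_angle (cross3 p q) (cross3 q r))
      * cis (vec_angle (cross3 q r) (cross3 r p))"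
    by (simp add: sph_excess_def cis_mult add.assoc)
  also have "\<dots> = complex_of_real k * (Complex (b * c - a) d * Complex (c * a - b) d * Complex (a * b - c) d)"
    using cis_vec_angle_normals[OF unit(1) D] cis_vec_angle_normals[of q r p] cis_vec_angle_normals[of r p q]
      unit D triple_product_cyclic[of p q r]
    unfolding a_def b_def c_def d_def k_def of_real_mult by (simp add: mult_ac)
  also have "\<dots> = complex_of_real (k * ((1 - a) * (1 - b) * (1 - c) / 2)) * (cnj (Complex (1 + a + b + c) d))\<^sup>2"
    unfolding Complex_product_Gram[OF gram] by simp
  finally have "cis (sph_excess p q r)
      = cnj (complex_of_real (k * ((1 - a) * (1 - b) * (1 - c) / 2)) * (cnj (Complex (1 + a + b + c) d))\<^sup>2)"
    by (metis complex_cnj_cnj)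
  then have "cis (sph_excess p q r)
      = complex_of_real (k * ((1 - a) * (1 - b) * (1 - c) / 2)) * (Complex (1 + a + b + c) d)\<^sup>2"
    by simp
  moreover have "Complex (1 + a + b + c) d = Complex (1 + p \<bullet> q + q \<bullet> r + r \<bullet> p) (p \<bullet> cross3 q r)"
    by (simp add: a_def b_def c_def d_def add_ac)
  ultimately show ?thesis using \<open>0 < k * ((1 - a) * (1 - b) * (1 - c) / 2)\<close> by metis
qed

theorem sph_excess_van_Oosterom_Strackee:
  fixes p q r :: "real^3"
  assumes unit: "norm p = 1" "norm q = 1" "norm r = 1" and D: "0 < p \<bullet> cross3 q r"
    and \<theta>: "0 < \<theta>" "\<theta> < pi"
    and tan: "(1 + p \<bullet> q + q \<bullet> r + r \<bullet> p) * sin \<theta> = (p \<bullet> cross3 q r) * cos \<theta>"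
  shows "sph_excess p q r = 2 * \<theta>"
proof -
  define S where "S = 1 + p \<bullet> q + q \<bullet> r + r \<bullet> p"
  define d where "d = p \<bullet> cross3 q r"
  define \<nu> where "\<nu> = d / sin \<theta>"
  have "0 < sin \<theta>" using \<theta> by (intro sin_gt_zero)
  then have "Complex S d = rcis \<nu> \<theta>"
    using tan unfolding S_def d_def \<nu>_def by (simp add: complex_eq_iff field_simps)
  then have "(Complex S d)\<^sup>2 = rcis (\<nu>\<^sup>2) (2 * \<theta>)" by (simp add: DeMoivre2)
  moreover obtain l where "0 < l" and "cis (sph_excess p q r) = complex_of_real l * (Complex S d)\<^sup>2"
    using cis_sph_excess[OF unit D] unfolding S_def d_def by blast
  ultimately have cis: "cis (sph_excess p q r) = rcis (l * \<nu>\<^sup>2) (2 * \<theta>)"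
    by (simp add: rcis_def)
  then have "\<bar>l * \<nu>\<^sup>2\<bar> = 1" by (metis complex_mod_rcis norm_cis)
  then have "cis (sph_excess p q r) = cis (2 * \<theta>)" using cis \<open>0 < l\<close> by (simp add: rcis_def)
  then obtain n :: int where n: "sph_excess p q r = 2 * \<theta> + 2 * pi * n"
    using sin_cos_eq_iff[of "sph_excess p q r" "2 * \<theta>"] by (auto simp: complex_eq_iff)
  have "\<bar>2 * pi * n\<bar> < 2 * pi * 1"
    using n \<theta> sph_excess_nonneg[OF D] sph_excess_le_2pi[of p q r] by linarith
  then have "n = 0" by (simp add: abs_mult)
  then show ?thesis using n by simp
qed

section \<open>Jacobi coordinates and shapes of centred triangles\<close>

lemma mtriangle_centre:
  assumes "is_mtriangle m a"
  shows "m 1 *\<^sub>R a 1 + m 2 *\<^sub>R a 2 = - (m 3 *\<^sub>R a 3)"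
    and "m 1 *\<^sub>R a 1 = - (m 2 *\<^sub>R a 2 + m 3 *\<^sub>R a 3)"
  using assms unfolding is_mtriangle_def eq_neg_iff_add_eq_0 by (simp_all add: add.assoc)

lemma mtriangle_vertex1:
  assumes "0 < m 1" "is_mtriangle m a"
  shows "a 1 = (- m 2 / m 1) *\<^sub>R a 2 + (- m 3 / m 1) *\<^sub>R a 3"
  using arg_cong[OF mtriangle_centre(2)[OF assms(2)], of "scaleR (1 / m 1)"] assms(1)
  by (simp add: scaleR_diff_right)

lemma sqrt_mult_eq_mult_sqrt_div:
  fixes c x :: real
  assumes "0 < c"
  shows "sqrt (c * x) = c * sqrt (x / c)"
proof -
  have "c * x = c\<^sup>2 * (x / c)" using assms by (simp add: power2_eq_square)
  then have "sqrt (c * x) = sqrt (c\<^sup>2) * sqrt (x / c)" by (simp only: real_sqrt_mult)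
  then show ?thesis using assms by simp
qed

lemma jacobi_centred:
  assumes m: "0 < m 1" "0 < m 2" "m 1 + m 2 + m 3 = 1" and a: "is_mtriangle m a"
  shows "jacobi1 m a = (sqrt (m 1 * m 2 / (m 1 + m 2)) / m 1) *\<^sub>R ((m 1 + m 2) *\<^sub>R a 2 + m 3 *\<^sub>R a 3)"
    and "jacobi2 m a = sqrt (m 3 / (m 1 + m 2)) *\<^sub>R a 3"
proof -
  have "m 1 *\<^sub>R (a 2 - a 1) = m 1 *\<^sub>R a 2 + (m 2 *\<^sub>R a 2 + m 3 *\<^sub>R a 3)"
    using mtriangle_centre(2)[OF a] by (simp add: scaleR_diff_right)
  also have "\<dots> = (m 1 + m 2) *\<^sub>R a 2 + m 3 *\<^sub>R a 3" by (simp add: scaleR_add_left)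
  finally have "m 1 *\<^sub>R (a 2 - a 1) = (m 1 + m 2) *\<^sub>R a 2 + m 3 *\<^sub>R a 3" .
  from arg_cong[OF this, of "scaleR (1 / m 1)"]
  have "a 2 - a 1 = (1 / m 1) *\<^sub>R ((m 1 + m 2) *\<^sub>R a 2 + m 3 *\<^sub>R a 3)"
    using m(1) by simp
  then show "jacobi1 m a = (sqrt (m 1 * m 2 / (m 1 + m 2)) / m 1) *\<^sub>R ((m 1 + m 2) *\<^sub>R a 2 + m 3 *\<^sub>R a 3)"
    unfolding jacobi1_def by simp
  have "sqrt ((m 1 + m 2) * m 3) = (m 1 + m 2) * sqrt (m 3 / (m 1 + m 2))"
    using m by (intro sqrt_mult_eq_mult_sqrt_div) simp
  moreover have "a 3 - (1 / (m 1 + m 2)) *\<^sub>R (m 1 *\<^sub>R a 1 + m 2 *\<^sub>R a 2) = (1 + m 3 / (m 1 + m 2)) *\<^sub>R a 3"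
    using mtriangle_centre(1)[OF a] by (simp add: scaleR_add_left)
  moreover have "1 + m 3 / (m 1 + m 2) = 1 / (m 1 + m 2)" using m by (simp add: field_simps)
  ultimately show "jacobi2 m a = sqrt (m 3 / (m 1 + m 2)) *\<^sub>R a 3"
    using m unfolding jacobi2_def by simp
qed

lemma power2_norm_lincomb:
  fixes x y :: "'a::real_inner"
  shows "(norm (u *\<^sub>R x + w *\<^sub>R y))\<^sup>2 = u\<^sup>2 * (x \<bullet> x) + 2 * u * w * (x \<bullet> y) + w\<^sup>2 * (y \<bullet> y)"
  unfolding power2_norm_eq_inner
  by (simp add: inner_add_left inner_add_right inner_commute power2_eq_square algebra_simps)

lemma inertia_centred:
  assumes m: "0 < m 1" "0 < m 2" "0 < m 3" "m 1 + m 2 + m 3 = 1" and a: "is_mtriangle m a"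
  shows "inertia m a = (norm (jacobi1 m a))\<^sup>2 + (norm (jacobi2 m a))\<^sup>2"
proof -
  define X Y Z where "X = a 2 \<bullet> a 2" "Y = a 3 \<bullet> a 3" "Z = a 2 \<bullet> a 3"
  have a1: "(norm (a 1))\<^sup>2 = (- m 2 / m 1)\<^sup>2 * X + 2 * (- m 2 / m 1) * (- m 3 / m 1) * Z + (- m 3 / m 1)\<^sup>2 * Y"
    unfolding mtriangle_vertex1[OF m(1) a] X_Y_Z_def by (rule power2_norm_lincomb)
  have lhs: "inertia m a = ((m 2)\<^sup>2 * X + 2 * m 2 * m 3 * Z + (m 3)\<^sup>2 * Y) / m 1 + m 2 * X + m 3 * Y"
    unfolding inertia_def a1 unfolding power2_norm_eq_inner X_Y_Z_def[symmetric]
    using m(1) by (simp add: field_simps power2_eq_square)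
  have z1: "(norm (jacobi1 m a))\<^sup>2 = (m 1 * m 2 / (m 1 + m 2)) / (m 1)\<^sup>2
      * ((m 1 + m 2)\<^sup>2 * X + 2 * (m 1 + m 2) * m 3 * Z + (m 3)\<^sup>2 * Y)"
    unfolding jacobi_centred(1)[OF m(1,2,4) a] norm_scaleR power_mult_distrib power2_norm_lincomb X_Y_Z_def
    using m by (simp add: power_divide)
  have z2: "(norm (jacobi2 m a))\<^sup>2 = m 3 / (m 1 + m 2) * Y"
    unfolding jacobi_centred(2)[OF m(1,2,4) a] X_Y_Z_def using m by (simp add: power_mult_distrib power2_norm_eq_inner)
  have m3: "m 3 = 1 - m 1 - m 2" using m(4) by simp
  show ?thesis
    unfolding lhs z1 z2 m3 using m(1,2) by (simp add: divide_simps add_pos_pos) algebra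
qed

lemma norm_vector3: "norm (vector [x, y, z] :: real^3) = sqrt (x\<^sup>2 + y\<^sup>2 + z\<^sup>2)"
  by (simp add: norm_eq_sqrt_inner inner_vec3 vector_3 power2_eq_square)

lemma scaleR_2_shape:
  "2 *\<^sub>R shape m a = (1 / inertia m a) *\<^sub>R vector [(norm (jacobi1 m a))\<^sup>2 - (norm (jacobi2 m a))\<^sup>2,
      2 * (jacobi1 m a \<bullet> jacobi2 m a), 2 * norm (cross3 (jacobi1 m a) (jacobi2 m a))]"
  by (simp add: shape_def Let_def vec_eq_iff forall_3 vector_3)

lemma norm_scaleR_2_shape:
  assumes "inertia m a = (norm (jacobi1 m a))\<^sup>2 + (norm (jacobi2 m a))\<^sup>2" "inertia m a \<noteq> 0"
  shows "norm (2 *\<^sub>R shape m a) = 1"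
proof -
  define z1 z2 where "z1 = jacobi1 m a" "z2 = jacobi2 m a"
  have "((norm z1)\<^sup>2 - (norm z2)\<^sup>2)\<^sup>2 + (2 * (z1 \<bullet> z2))\<^sup>2 + (2 * norm (cross3 z1 z2))\<^sup>2
      = ((norm z1)\<^sup>2 + (norm z2)\<^sup>2)\<^sup>2"
    using norm_cross_dot[of z1 z2] by (simp add: power2_eq_square algebra_simps)
  then have "norm (vector [(norm z1)\<^sup>2 - (norm z2)\<^sup>2, 2 * (z1 \<bullet> z2), 2 * norm (cross3 z1 z2)] :: real^3)
      = (norm z1)\<^sup>2 + (norm z2)\<^sup>2"
    unfolding norm_vector3 by simp
  then show ?thesis
    using assms unfolding scaleR_2_shape z1_z2_def[symmetric] by simp
qed

definition collinear_shape :: "real \<Rightarrow> real \<Rightarrow> real^3" where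
  "collinear_shape s t = vector [(s\<^sup>2 - t\<^sup>2) / (s\<^sup>2 + t\<^sup>2), 2 * s * t / (s\<^sup>2 + t\<^sup>2), 0]"

lemma norm_collinear_shape:
  assumes "s\<^sup>2 + t\<^sup>2 \<noteq> 0"
  shows "norm (collinear_shape s t) = 1"
proof -
  have "(s\<^sup>2 - t\<^sup>2)\<^sup>2 + (2 * s * t)\<^sup>2 = (s\<^sup>2 + t\<^sup>2)\<^sup>2" by algebra
  then show ?thesis
    using assms unfolding collinear_shape_def norm_vector3
    by (simp add: power_divide add_divide_distrib[symmetric])
qed

lemma shape_collinear:
  assumes z: "jacobi1 m a = s *\<^sub>R x" "jacobi2 m a = t *\<^sub>R x"
    and I: "inertia m a = (norm (jacobi1 m a))\<^sup>2 + (norm (jacobi2 m a))\<^sup>2" "inertia m a \<noteq> 0"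
  shows "2 *\<^sub>R shape m a = collinear_shape s t"
proof -
  define X where "X = x \<bullet> x"
  have I': "inertia m a = (s\<^sup>2 + t\<^sup>2) * X"
    using I(1) unfolding z X_def by (simp add: power_mult_distrib power2_norm_eq_inner algebra_simps)
  then have "s\<^sup>2 + t\<^sup>2 \<noteq> 0" "X \<noteq> 0" using I(2) by auto
  moreover have "(norm (jacobi1 m a))\<^sup>2 - (norm (jacobi2 m a))\<^sup>2 = (s\<^sup>2 - t\<^sup>2) * X"
    "2 * (jacobi1 m a \<bullet> jacobi2 m a) = (2 * s * t) * X" "cross3 (jacobi1 m a) (jacobi2 m a) = 0"
    unfolding z X_def
    by (simp_all add: power_mult_distrib power2_norm_eq_inner cross_mult_left cross_mult_right algebra_simps)
  ultimately show ?thesis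
    unfolding scaleR_2_shape collinear_shape_def I' by (simp add: vec_eq_iff forall_3 vector_3)
qed

lemma binary_collision_eqI:
  assumes "\<And>a. is_mtriangle m a \<Longrightarrow> a i = a j \<Longrightarrow> inertia m a \<noteq> 0 \<Longrightarrow> shape m a = p"
    and "is_mtriangle m a0" "a0 i = a0 j" "inertia m a0 \<noteq> 0"
  shows "binary_collision m i j = p"
  unfolding binary_collision_def using assms by (intro the_equality) blast+

lemma collision_configuration_exists:
  assumes m: "0 < m 1" "0 < m 2" "0 < m 3" "m 1 + m 2 + m 3 = 1" and k: "k \<in> {1, 2, 3}"
  shows "\<exists>a. is_mtriangle m a \<and> (\<forall>i \<in> {1, 2, 3} - {k}. a i = axis 1 1) \<and> inertia m a \<noteq> 0"
proof -
  define c where "c i = (if i = k then 1 - 1 / m k else 1)" for i :: nat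
  define a :: "nat \<Rightarrow> real^3" where "a i = c i *\<^sub>R axis 1 1" for i
  have "m 1 * c 1 + m 2 * c 2 + m 3 * c 3 = 0"
    using k m by (auto simp: c_def right_diff_distrib)
  then have "is_mtriangle m a"
    unfolding is_mtriangle_def a_def by (simp add: scaleR_add_left[symmetric])
  moreover have "inertia m a = m 1 * (c 1)\<^sup>2 + m 2 * (c 2)\<^sup>2 + m 3 * (c 3)\<^sup>2"
    unfolding inertia_def a_def by (simp add: power_mult_distrib)
  moreover have "0 < m 1 * (c 1)\<^sup>2 + m 2 * (c 2)\<^sup>2 + m 3 * (c 3)\<^sup>2"
  proof -
    have "0 \<le> m 1 * (c 1)\<^sup>2" "0 \<le> m 2 * (c 2)\<^sup>2" "0 \<le> m 3 * (c 3)\<^sup>2" using m by simp_all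
    moreover have "0 < m 1 * (c 1)\<^sup>2 \<or> 0 < m 2 * (c 2)\<^sup>2" using m by (cases "k = 1") (simp_all add: c_def)
    ultimately show ?thesis by linarith
  qed
  ultimately show ?thesis by (intro exI[of _ a]) (auto simp: a_def c_def)
qed

lemma binary_collision_12:
  assumes m: "0 < m 1" "0 < m 2" "0 < m 3" "m 1 + m 2 + m 3 = 1"
  shows "binary_collision m 1 2 = (1 / 2) *\<^sub>R vector [-1, 0, 0]"
proof -
  have "shape m a = (1 / 2) *\<^sub>R vector [-1, 0, 0]"
    if a: "is_mtriangle m a" "a 1 = a 2" "inertia m a \<noteq> 0" for a
  proof -
    have "jacobi1 m a = 0 *\<^sub>R a 3" unfolding jacobi1_def a(2) by simp
    then have "2 *\<^sub>R shape m a = collinear_shape 0 (sqrt (m 3 / (m 1 + m 2)))"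
      using a jacobi_centred(2)[OF m(1,2,4) a(1)] inertia_centred[OF m a(1)] by (intro shape_collinear)
    also have "\<dots> = vector [-1, 0, 0]" using m by (simp add: collinear_shape_def)
    finally have "2 *\<^sub>R shape m a = vector [-1, 0, 0]" .
    from arg_cong[OF this, of "scaleR (1 / 2)"] show ?thesis by simp
  qed
  moreover obtain a0 where "is_mtriangle m a0" "a0 1 = a0 2" "inertia m a0 \<noteq> 0"
    using collision_configuration_exists[OF m, of 3] by auto
  ultimately show ?thesis by (rule binary_collision_eqI)
qed

lemma binary_collision_31:
  assumes m: "0 < m 1" "0 < m 2" "0 < m 3" "m 1 + m 2 + m 3 = 1"
  shows "binary_collision m 3 1
       = (1 / 2) *\<^sub>R collinear_shape (- sqrt (m 1 * m 2 / (m 1 + m 2)) / m 2) (sqrt (m 3 / (m 1 + m 2)))"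
proof -
  have "shape m a = (1 / 2) *\<^sub>R collinear_shape (- sqrt (m 1 * m 2 / (m 1 + m 2)) / m 2) (sqrt (m 3 / (m 1 + m 2)))"
    if a: "is_mtriangle m a" "a 3 = a 1" "inertia m a \<noteq> 0" for a
  proof -
    have "m 2 *\<^sub>R (a 2 - a 1) = (m 1 *\<^sub>R a 1 + m 2 *\<^sub>R a 2 + m 3 *\<^sub>R a 3) - (m 1 + m 2 + m 3) *\<^sub>R a 1"
      using a(2) by (simp add: algebra_simps)
    also have "\<dots> = - a 3" using a(1,2) m(4) unfolding is_mtriangle_def by simp
    finally have "m 2 *\<^sub>R (a 2 - a 1) = - a 3" .
    from arg_cong[OF this, of "scaleR (1 / m 2)"] have "a 2 - a 1 = (- 1 / m 2) *\<^sub>R a 3"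
      using m(2) by simp
    then have "jacobi1 m a = (- sqrt (m 1 * m 2 / (m 1 + m 2)) / m 2) *\<^sub>R a 3"
      by (simp add: jacobi1_def)
    then have "2 *\<^sub>R shape m a = collinear_shape (- sqrt (m 1 * m 2 / (m 1 + m 2)) / m 2) (sqrt (m 3 / (m 1 + m 2)))"
      using a jacobi_centred(2)[OF m(1,2,4) a(1)] inertia_centred[OF m a(1)] by (intro shape_collinear)
    from arg_cong[OF this, of "scaleR (1 / 2)"] show ?thesis by simp
  qed
  moreover obtain a0 where "is_mtriangle m a0" "a0 3 = a0 1" "inertia m a0 \<noteq> 0"
    using collision_configuration_exists[OF m, of 2] by auto
  ultimately show ?thesis by (rule binary_collision_eqI)
qed

lemma cross3_sides_mtriangle:
  assumes m: "0 < m 1" "m 1 + m 2 + m 3 = 1" and a: "is_mtriangle m a"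
  shows "cross3 (a 2 - a 1) (a 3 - a 1) = (1 / m 1) *\<^sub>R cross3 (a 2) (a 3)"
proof -
  define u w where "u = m 2 / m 1" "w = m 3 / m 1"
  have a1: "a 1 = (- u) *\<^sub>R a 2 + (- w) *\<^sub>R a 3"
    unfolding u_w_def using mtriangle_vertex1[OF m(1) a] by simp
  have "cross3 (a 2 - a 1) (a 3 - a 1) = (1 + u + w) *\<^sub>R cross3 (a 2) (a 3)"
    unfolding a1 by (simp add: cross3_def vec_eq_iff forall_3 vector_3 algebra_simps)
  moreover have "1 + u + w = 1 / m 1" using m unfolding u_w_def by (simp add: field_simps)
  ultimately show ?thesis by simp
qed

lemma scaleR_2_shape_centred:
  fixes m :: "nat \<Rightarrow> real" and a :: "nat \<Rightarrow> real^3"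
  assumes m: "0 < m 1" "0 < m 2" "0 < m 3" "m 1 + m 2 + m 3 = 1" and a: "is_mtriangle m a" "a 3 \<noteq> 0"
  defines "\<mu> \<equiv> m 1 + m 2"
  defines "C \<equiv> sqrt (m 1 * m 2 / \<mu>) / m 1" and "t \<equiv> sqrt (m 3 / \<mu>)"
  shows "inertia m a = (norm (jacobi1 m a))\<^sup>2 + t\<^sup>2 * (a 3 \<bullet> a 3)" and "0 < inertia m a"
    and "(2 *\<^sub>R shape m a)$1 = ((norm (jacobi1 m a))\<^sup>2 - t\<^sup>2 * (a 3 \<bullet> a 3)) / inertia m a"
    and "(2 *\<^sub>R shape m a)$2 = 2 * (C * t * (\<mu> * (a 2 \<bullet> a 3) + m 3 * (a 3 \<bullet> a 3))) / inertia m a"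
    and "(2 *\<^sub>R shape m a)$3 = 2 * (C * t * \<mu> * norm (cross3 (a 2) (a 3))) / inertia m a"
proof -
  have z1: "jacobi1 m a = C *\<^sub>R (\<mu> *\<^sub>R a 2 + m 3 *\<^sub>R a 3)" and z2: "jacobi2 m a = t *\<^sub>R a 3"
    unfolding C_def \<mu>_def t_def using jacobi_centred[OF m(1,2,4) a(1)] by simp_all
  have "0 < \<mu>" "0 < C" "0 < t" using m by (simp_all add: \<mu>_def C_def t_def)
  have Z2: "(norm (jacobi2 m a))\<^sup>2 = t\<^sup>2 * (a 3 \<bullet> a 3)"
    unfolding z2 by (simp add: power_mult_distrib power2_norm_eq_inner)
  then show I: "inertia m a = (norm (jacobi1 m a))\<^sup>2 + t\<^sup>2 * (a 3 \<bullet> a 3)"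
    using inertia_centred[OF m a(1)] by simp
  then show "0 < inertia m a" using \<open>0 < t\<close> a(2) by (simp add: add_nonneg_pos)
  have "jacobi1 m a \<bullet> jacobi2 m a = C * t * (\<mu> * (a 2 \<bullet> a 3) + m 3 * (a 3 \<bullet> a 3))"
    unfolding z1 z2 by (simp add: inner_add_left algebra_simps)
  moreover have "norm (cross3 (jacobi1 m a) (jacobi2 m a)) = C * t * \<mu> * norm (cross3 (a 2) (a 3))"
    unfolding z1 z2 using \<open>0 < \<mu>\<close> \<open>0 < C\<close> \<open>0 < t\<close>
    by (simp add: cross_add_left cross_mult_left cross_mult_right)
  ultimately show "(2 *\<^sub>R shape m a)$1 = ((norm (jacobi1 m a))\<^sup>2 - t\<^sup>2 * (a 3 \<bullet> a 3)) / inertia m a"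
    and "(2 *\<^sub>R shape m a)$2 = 2 * (C * t * (\<mu> * (a 2 \<bullet> a 3) + m 3 * (a 3 \<bullet> a 3))) / inertia m a"
    and "(2 *\<^sub>R shape m a)$3 = 2 * (C * t * \<mu> * norm (cross3 (a 2) (a 3))) / inertia m a"
    unfolding scaleR_2_shape Z2 by (simp_all add: vector_3)
qed

text \<open>Here \<open>p\<close>, \<open>r\<close> and \<open>q\<close> are twice the binary collision shapes \<open>b\<^sub>1\<^sub>2\<close>, \<open>b\<^sub>3\<^sub>1\<close> and twice
  the shape \<open>\<delta>\<^sup>*\<close>.\<close>
lemma shape_triangle_tan_half_excess:
  fixes m :: "nat \<Rightarrow> real" and a :: "nat \<Rightarrow> real^3"
  assumes m: "0 < m 1" "0 < m 2" "0 < m 3" "m 1 + m 2 + m 3 = 1" and a: "is_mtriangle m a"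
    and cross: "cross3 (a 2) (a 3) \<noteq> 0"
  defines "s \<equiv> - sqrt (m 1 * m 2 / (m 1 + m 2)) / m 2" and "t \<equiv> sqrt (m 3 / (m 1 + m 2))"
  defines "p \<equiv> vector [-1, 0, 0] :: real^3" and "r \<equiv> collinear_shape s t" and "q \<equiv> 2 *\<^sub>R shape m a"
    and "\<alpha> \<equiv> vec_angle (a 2) (a 3)"
  shows "norm r = 1" and "norm q = 1" and "0 < p \<bullet> cross3 r q"
    and "(1 + p \<bullet> r + r \<bullet> q + q \<bullet> p) * sin (pi - \<alpha>) = (p \<bullet> cross3 r q) * cos (pi - \<alpha>)"
proof -
  define \<mu> C where "\<mu> = m 1 + m 2" and "C = sqrt (m 1 * m 2 / \<mu>) / m 1"
  define G K where "G = a 2 \<bullet> a 3" and "K = norm (cross3 (a 2) (a 3))"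
  have "a 2 \<noteq> 0" "a 3 \<noteq> 0" "0 < K" using cross by (auto simp: K_def)
  have s: "s = - sqrt (m 1 * m 2 / \<mu>) / m 2" and t: "t = sqrt (m 3 / \<mu>)"
    unfolding s_def t_def \<mu>_def by (rule refl)+
  note shape = scaleR_2_shape_centred[OF m a \<open>a 3 \<noteq> 0\<close>, folded \<mu>_def, folded C_def q_def t G_def K_def]
  have "0 < \<mu>" using m by (simp add: \<mu>_def)
  have "C * s * \<mu> = - (sqrt (m 1 * m 2 / \<mu>))\<^sup>2 * \<mu> / (m 1 * m 2)"
    unfolding C_def s by (simp add: power2_eq_square)
  also have "\<dots> = -1" using m \<open>0 < \<mu>\<close> by simp
  finally have "C * s * \<mu> = -1" .
  have "t\<^sup>2 * \<mu> = m 3" "s < 0" "0 < t" "0 < C"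
    using m \<open>0 < \<mu>\<close> unfolding s t C_def \<mu>_def[symmetric] by simp_all
  then have "s\<^sup>2 + t\<^sup>2 \<noteq> 0" by (simp add: add_nonneg_pos)
  then show "norm r = 1" unfolding r_def by (rule norm_collinear_shape)
  show "norm q = 1"
    unfolding q_def using shape(2) by (intro norm_scaleR_2_shape[OF inertia_centred[OF m a]]) simp
  have r: "r$1 = (s\<^sup>2 - t\<^sup>2) / (s\<^sup>2 + t\<^sup>2)" "r$2 = 2 * s * t / (s\<^sup>2 + t\<^sup>2)" "r$3 = 0"
    unfolding r_def collinear_shape_def by (simp_all add: vector_3)
  have D: "p \<bullet> cross3 r q = - (r$2 * q$3)"
    unfolding p_def by (simp add: cross3_def inner_vec3 vector_3 r(3))
  have S: "1 + p \<bullet> r + r \<bullet> q + q \<bullet> p = (1 - q$1) * (1 - r$1) + r$2 * q$2"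
    unfolding p_def by (simp add: inner_vec3 vector_3 r(3) algebra_simps)
  have key: "(1 + p \<bullet> r + r \<bullet> q + q \<bullet> p) * K = r$2 * q$3 * G"
    unfolding S shape(3-5) r using shape(1,2) \<open>s\<^sup>2 + t\<^sup>2 \<noteq> 0\<close> \<open>C * s * \<mu> = -1\<close> \<open>t\<^sup>2 * \<mu> = m 3\<close>
    by (simp add: divide_simps) algebra
  have "r$2 < 0" "0 < q$3"
    unfolding r shape(5) using \<open>s < 0\<close> \<open>0 < t\<close> \<open>0 < C\<close> \<open>0 < \<mu>\<close> \<open>0 < K\<close> shape(2)
    by (simp_all add: divide_neg_pos mult_neg_pos add_nonneg_pos)
  then show "0 < p \<bullet> cross3 r q" unfolding D by (simp add: mult_neg_pos)
  show "(1 + p \<bullet> r + r \<bullet> q + q \<bullet> p) * sin (pi - \<alpha>) = (p \<bullet> cross3 r q) * cos (pi - \<alpha>)"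
    using key \<open>a 2 \<noteq> 0\<close> \<open>a 3 \<noteq> 0\<close> unfolding D \<alpha>_def G_def K_def
    by (simp add: sin_vec_angle cos_vec_angle field_simps)
qed

theorem mainTheorem16:
  fixes m :: "nat \<Rightarrow> real" and a :: "nat \<Rightarrow> real^3"
  assumes "m 1 > 0" "m 2 > 0" "m 3 > 0" "m 1 + m 2 + m 3 = 1"
    and "is_mtriangle m a"
    and "nondegenerate a"
  shows "sph_area (1/2) (sph_triangle (1/2) (binary_collision m 1 2) (shape m a)
            (binary_collision m 3 1))
         = (pi - vec_angle (a 2) (a 3)) / 2"
proof -
  note m = assms(1-4)
  define p q r where "p = (vector [-1, 0, 0] :: real^3)" and "q = 2 *\<^sub>R shape m a"
    and "r = collinear_shape (- sqrt (m 1 * m 2 / (m 1 + m 2)) / m 2) (sqrt (m 3 / (m 1 + m 2)))"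
  define \<alpha> where "\<alpha> = vec_angle (a 2) (a 3)"
  have cross: "cross3 (a 2) (a 3) \<noteq> 0"
    using assms(6) cross3_sides_mtriangle[OF m(1,4) assms(5)] unfolding nondegenerate_def by auto
  note triangle = shape_triangle_tan_half_excess[OF m assms(5) cross, folded p_def q_def r_def \<alpha>_def]
  have "norm p = 1" by (simp add: p_def norm_vector3)
  moreover have "0 < pi - \<alpha>" "pi - \<alpha> < pi" using vec_angle_bounds_strict[OF cross] by (simp_all add: \<alpha>_def)
  ultimately have excess: "sph_excess p r q = 2 * (pi - \<alpha>)"
    using triangle by (intro sph_excess_van_Oosterom_Strackee) (simp_all add: algebra_simps)
  have "binary_collision m 1 2 = (1/2) *\<^sub>R p" "binary_collision m 3 1 = (1/2) *\<^sub>R r" "shape m a = (1/2) *\<^sub>R q"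
    unfolding p_def q_def r_def binary_collision_12[OF m] binary_collision_31[OF m] by simp_all
  then have "sph_triangle (1/2) (binary_collision m 1 2) (shape m a) (binary_collision m 3 1)
      = sph_triangle (1/2) ((1/2) *\<^sub>R p) ((1/2) *\<^sub>R r) ((1/2) *\<^sub>R q)"
    by (simp add: sph_triangle_swap[of _ "(1/2) *\<^sub>R p" "(1/2) *\<^sub>R q"])
  moreover have "0 < ((1/2) *\<^sub>R p) \<bullet> cross3 ((1/2) *\<^sub>R r) ((1/2) *\<^sub>R q)"
    using triangle(3) by (simp add: cross_mult_left cross_mult_right)
  ultimately show ?thesis
    using sph_area_sph_triangle[of "(1/2) *\<^sub>R p" "(1/2) *\<^sub>R r" "(1/2) *\<^sub>R q" "1/2"]
    by (simp add: sph_excess_scaleR excess \<alpha>_def power2_eq_square)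
qed

end
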